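(* Let $C$ be a directed cycle on a finite vertex set, and for vertices $a,b$ let $c(a,b)$ be the number of edges of the directed path along $C$ from $a$ to $b$ ($c(a,a)=0$). Let $a_1,\dots,a_Q$ (sources) and $b_1,\dots,b_Q$ (sinks) be vertices of $C$ (repetitions allowed). The cost of a bijection $\sigma:[Q]\to[Q]$ (pairing $a_i$ with $b_{\sigma(i)}$) is $\sum_{i=1}^Q c(a_i,b_{\sigma(i)})$. Consider the algorithm GREEDY which, while unpaired elements remain, picks an arbitrary unpaired source $a_i$ and pairs it with an unpaired sink $b_j$ minimizing $c(a_i,b_j)$, or picks an arbitrary unpaired sink $b_j$ and pairs it with an unpaired source $a_i$ minimizing $c(a_i,b_j)$. Then every pairing produced by GREEDY has minimum cost among all bijections. *)

theory Defs
  imports Main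
begin

text \<open>Directed cycle on the vertex set {0..<n} (n \<ge> 1), edges v \<rightarrow> (v+1) mod n.
  cdist n a b = number of edges of the directed path along the cycle from a to b.\<close>
definition cdist :: "nat \<Rightarrow> nat \<Rightarrow> nat \<Rightarrow> nat" where
  "cdist n a b = (b + n - a) mod n"

definition pairing_cost :: "nat \<Rightarrow> nat \<Rightarrow> (nat \<Rightarrow> nat) \<Rightarrow> (nat \<Rightarrow> nat) \<Rightarrow> (nat \<Rightarrow> nat) \<Rightarrow> nat" where
  "pairing_cost n Q a b \<sigma> = (\<Sum>i\<in>{1..Q}. cdist n (a i) (b (\<sigma> i)))"

text \<open>greedy_run n a b I J P: starting with unpaired sources (indices) I and unpaired
  sinks (indices) J, some execution of GREEDY produces the set of pairs P.\<close>
inductive greedy_run :: "nat \<Rightarrow> (nat \<Rightarrow> nat) \<Rightarrow> (nat \<Rightarrow> nat) \<Rightarrow> nat set \<Rightarrow> nat set \<Rightarrow> (nat \<times> nat) set \<Rightarrow> bool"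
  for n a b where
  finished: "greedy_run n a b {} {} {}"
| pick_source: "\<lbrakk> i \<in> I; j \<in> J; \<forall>j'\<in>J. cdist n (a i) (b j) \<le> cdist n (a i) (b j');
     greedy_run n a b (I - {i}) (J - {j}) P \<rbrakk> \<Longrightarrow> greedy_run n a b I J (insert (i, j) P)"
| pick_sink: "\<lbrakk> i \<in> I; j \<in> J; \<forall>i'\<in>I. cdist n (a i) (b j) \<le> cdist n (a i') (b j);
     greedy_run n a b (I - {i}) (J - {j}) P \<rbrakk> \<Longrightarrow> greedy_run n a b I J (insert (i, j) P)"

end

theory Submission
  imports Defs "HOL-Combinatorics.Transposition"
begin

text \<open>Call the pair \<open>(i, j)\<close> exchange safe if replacing any two pairs \<open>(i, l)\<close>, \<open>(k, j)\<close>
  of an assignment by \<open>(i, j)\<close>, \<open>(k, l)\<close> never increases the cost. Fixing a safe pair first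
  therefore loses nothing, and an induction along the run of GREEDY shows that its pairing is
  optimal. On a directed cycle, if \<open>b\<^sub>j\<close> is a nearest sink of \<open>a\<^sub>i\<close> then \<open>b\<^sub>j\<close> lies on the path
  from \<open>a\<^sub>i\<close> to every other sink, so the triangle inequality makes \<open>(i, j)\<close> exchange safe;
  symmetrically for a nearest source of \<open>b\<^sub>j\<close>.\<close>

definition assignment_cost :: "('a \<Rightarrow> 'b \<Rightarrow> 'c::comm_monoid_add) \<Rightarrow> ('a \<Rightarrow> 'b) \<Rightarrow> 'a set \<Rightarrow> 'c" where
  "assignment_cost c \<sigma> I = (\<Sum>k\<in>I. c k (\<sigma> k))"

definition optimal_assignment ::
    "('a \<Rightarrow> 'b \<Rightarrow> 'c::{comm_monoid_add, ord}) \<Rightarrow> 'a set \<Rightarrow> 'b set \<Rightarrow> ('a \<Rightarrow> 'b) \<Rightarrow> bool" where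
  "optimal_assignment c I J \<sigma> \<longleftrightarrow> bij_betw \<sigma> I J \<and>
     (\<forall>\<tau>. bij_betw \<tau> I J \<longrightarrow> assignment_cost c \<sigma> I \<le> assignment_cost c \<tau> I)"

definition exchange_safe ::
    "('a \<Rightarrow> 'b \<Rightarrow> 'c::{plus, ord}) \<Rightarrow> 'a set \<Rightarrow> 'b set \<Rightarrow> 'a \<Rightarrow> 'b \<Rightarrow> bool" where
  "exchange_safe c I J i j \<longleftrightarrow> (\<forall>k\<in>I. \<forall>l\<in>J. c i j + c k l \<le> c i l + c k j)"

lemma assignment_cost_remove:
  "finite I \<Longrightarrow> i \<in> I \<Longrightarrow> assignment_cost c \<sigma> I = c i (\<sigma> i) + assignment_cost c \<sigma> (I - {i})"
  unfolding assignment_cost_def by (rule sum.remove)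

lemma assignment_cost_cong:
  "(\<And>k. k \<in> I \<Longrightarrow> \<sigma> k = \<tau> k) \<Longrightarrow> assignment_cost c \<sigma> I = assignment_cost c \<tau> I"
  unfolding assignment_cost_def by simp

lemma exchange_safe_swap:
  fixes c :: "'a \<Rightarrow> 'b \<Rightarrow> 'c::ordered_comm_monoid_add"
  assumes "finite I" "i \<in> I" "j \<in> J" "bij_betw \<tau> I J" "exchange_safe c I J i j"
  obtains \<tau>' where "bij_betw \<tau>' I J" "\<tau>' i = j" "assignment_cost c \<tau>' I \<le> assignment_cost c \<tau> I"
proof (cases "\<tau> i = j")
  case True
  then show ?thesis using assms(4) that by blast
next
  case False
  obtain k where k: "k \<in> I" "\<tau> k = j"
    using assms(3,4) unfolding bij_betw_def by blast
  have "k \<noteq> i" using False k by auto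
  define \<tau>' where "\<tau>' = Fun.swap i k \<tau>"
  have bij: "bij_betw \<tau>' I J"
    unfolding \<tau>'_def using bij_betw_swap_iff[OF assms(2) k(1)] assms(4) by blast
  have \<tau>'_ik: "\<tau>' i = j" "\<tau>' k = \<tau> i"
    using k by (auto simp: \<tau>'_def transpose_def)
  let ?R = "I - {i} - {k}"
  have split: "assignment_cost c \<sigma> I = c i (\<sigma> i) + c k (\<sigma> k) + assignment_cost c \<sigma> ?R" for \<sigma>
    using assms(1,2) k(1) \<open>k \<noteq> i\<close>
    by (simp add: assignment_cost_remove[of I i] assignment_cost_remove[of "I - {i}" k] add.assoc)
  have rest: "assignment_cost c \<tau>' ?R = assignment_cost c \<tau> ?R"
    by (rule assignment_cost_cong) (auto simp: \<tau>'_def transpose_def)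
  have "\<tau> i \<in> J" using assms(2,4) by (auto simp: bij_betw_def)
  then have "c i (\<tau>' i) + c k (\<tau>' k) \<le> c i (\<tau> i) + c k (\<tau> k)"
    using assms(5) k \<tau>'_ik unfolding exchange_safe_def by auto
  then have "assignment_cost c \<tau>' I \<le> assignment_cost c \<tau> I"
    unfolding split[of \<tau>'] split[of \<tau>] rest by (rule add_right_mono)
  with bij \<tau>'_ik show ?thesis using that by blast
qed

lemma optimal_assignment_insert_safe_pair:
  fixes c :: "'a \<Rightarrow> 'b \<Rightarrow> 'c::ordered_comm_monoid_add"
  assumes "finite I" "i \<in> I" "j \<in> J" "exchange_safe c I J i j"
    and opt: "optimal_assignment c (I - {i}) (J - {j}) \<sigma>"
  shows "optimal_assignment c I J (\<sigma>(i := j))"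
proof -
  let ?\<sigma> = "\<sigma>(i := j)"
  have "bij_betw \<sigma> (I - {i}) (J - {j})"
    using opt unfolding optimal_assignment_def by blast
  then have "bij_betw ?\<sigma> (I - {i}) (J - {j})"
    by (rule bij_betw_cong[THEN iffD1, rotated]) simp
  then have "bij_betw ?\<sigma> (insert i (I - {i})) (insert j (J - {j}))"
    using notIn_Un_bij_betw3[of i "I - {i}" ?\<sigma> "J - {j}"] by simp
  then have bij: "bij_betw ?\<sigma> I J"
    using assms(2,3) by (simp add: insert_absorb)
  have "assignment_cost c ?\<sigma> I \<le> assignment_cost c \<tau> I" if \<tau>: "bij_betw \<tau> I J" for \<tau>
  proof -
    obtain \<tau>' where \<tau>': "bij_betw \<tau>' I J" "\<tau>' i = j"
        "assignment_cost c \<tau>' I \<le> assignment_cost c \<tau> I"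
      using exchange_safe_swap[OF assms(1-3) \<tau> assms(4)] by blast
    have "bij_betw \<tau>' (I - {i}) (J - {j})"
      using bij_betw_DiffI[OF \<tau>'(1), of "{i}" "{j}"] \<tau>'(2) assms(2,3) by auto
    then have "assignment_cost c \<sigma> (I - {i}) \<le> assignment_cost c \<tau>' (I - {i})"
      using opt unfolding optimal_assignment_def by blast
    moreover have "assignment_cost c ?\<sigma> (I - {i}) = assignment_cost c \<sigma> (I - {i})"
      by (rule assignment_cost_cong) simp
    ultimately have "assignment_cost c ?\<sigma> I \<le> assignment_cost c \<tau>' I"
      using assms(1,2) \<tau>'(2) by (simp add: assignment_cost_remove[of I i] add_left_mono)
    also note \<tau>'(3)
    finally show ?thesis .
  qed
  with bij show ?thesis unfolding optimal_assignment_def by blast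
qed

lemma cdist_eq_if:
  "x < n \<Longrightarrow> y < n \<Longrightarrow> cdist n x y = (if x \<le> y then y - x else y + n - x)"
proof (cases "x \<le> y")
  case True
  then have "y + n - x = (y - x) + n" by simp
  moreover assume "y < n"
  ultimately show ?thesis using True by (simp only: cdist_def mod_add_self2) simp
qed (simp add: cdist_def)

lemma cdist_triangle:
  "x < n \<Longrightarrow> y < n \<Longrightarrow> z < n \<Longrightarrow> cdist n x z \<le> cdist n x y + cdist n y z"
  by (simp add: cdist_eq_if; arith)

lemma cdist_split_at_nearer_target:
  "x < n \<Longrightarrow> y < n \<Longrightarrow> z < n \<Longrightarrow> cdist n x y \<le> cdist n x z \<Longrightarrow>
    cdist n x z = cdist n x y + cdist n y z"
  by (simp add: cdist_eq_if split: if_splits; arith)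

lemma cdist_split_at_nearer_source:
  "w < n \<Longrightarrow> x < n \<Longrightarrow> y < n \<Longrightarrow> cdist n x y \<le> cdist n w y \<Longrightarrow>
    cdist n w y = cdist n w x + cdist n x y"
  by (simp add: cdist_eq_if split: if_splits; arith)

lemma cdist_exchange_nearer_target:
  assumes "w < n" "x < n" "y < n" "z < n" "cdist n x y \<le> cdist n x z"
  shows "cdist n x y + cdist n w z \<le> cdist n x z + cdist n w y"
  using cdist_split_at_nearer_target[OF assms(2-5)] cdist_triangle[OF assms(1,3,4)] by linarith

lemma cdist_exchange_nearer_source:
  assumes "w < n" "x < n" "y < n" "z < n" "cdist n x y \<le> cdist n w y"
  shows "cdist n x y + cdist n w z \<le> cdist n x z + cdist n w y"
  using cdist_split_at_nearer_source[OF assms(1-3,5)] cdist_triangle[OF assms(1,2,4)] by linarith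

lemma nearest_sink_exchange_safe:
  assumes "i \<in> I" "j \<in> J" "\<forall>k\<in>I. a k < n" "\<forall>l\<in>J. b l < n"
    and "\<forall>l\<in>J. cdist n (a i) (b j) \<le> cdist n (a i) (b l)"
  shows "exchange_safe (\<lambda>i j. cdist n (a i) (b j)) I J i j"
  unfolding exchange_safe_def
proof (intro ballI)
  fix k l assume "k \<in> I" "l \<in> J"
  with assms show "cdist n (a i) (b j) + cdist n (a k) (b l) \<le> cdist n (a i) (b l) + cdist n (a k) (b j)"
    by (intro cdist_exchange_nearer_target) auto
qed

lemma nearest_source_exchange_safe:
  assumes "i \<in> I" "j \<in> J" "\<forall>k\<in>I. a k < n" "\<forall>l\<in>J. b l < n"
    and "\<forall>k\<in>I. cdist n (a i) (b j) \<le> cdist n (a k) (b j)"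
  shows "exchange_safe (\<lambda>i j. cdist n (a i) (b j)) I J i j"
  unfolding exchange_safe_def
proof (intro ballI)
  fix k l assume "k \<in> I" "l \<in> J"
  with assms show "cdist n (a i) (b j) + cdist n (a k) (b l) \<le> cdist n (a i) (b l) + cdist n (a k) (b j)"
    by (intro cdist_exchange_nearer_source) auto
qed

lemma optimal_assignment_extend:
  fixes c :: "'a \<Rightarrow> 'b \<Rightarrow> 'c::ordered_comm_monoid_add"
  assumes "finite I" "i \<in> I" "j \<in> J" "exchange_safe c I J i j"
    and "\<exists>\<sigma>. optimal_assignment c (I - {i}) (J - {j}) \<sigma> \<and> P = {(k, \<sigma> k) | k. k \<in> I - {i}}"
  shows "\<exists>\<sigma>. optimal_assignment c I J \<sigma> \<and> insert (i, j) P = {(k, \<sigma> k) | k. k \<in> I}"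
proof -
  obtain \<sigma> where opt: "optimal_assignment c (I - {i}) (J - {j}) \<sigma>"
      and graph: "P = {(k, \<sigma> k) | k. k \<in> I - {i}}"
    using assms(5) by blast
  have "insert (i, j) P = {(k, (\<sigma>(i := j)) k) | k. k \<in> I}"
    using graph assms(2) by auto
  with optimal_assignment_insert_safe_pair[OF assms(1-4) opt] show ?thesis by blast
qed

lemma greedy_run_optimal:
  assumes "greedy_run n a b I J P" "finite I" "\<forall>i\<in>I. a i < n" "\<forall>j\<in>J. b j < n"
  shows "\<exists>\<sigma>. optimal_assignment (\<lambda>i j. cdist n (a i) (b j)) I J \<sigma> \<and> P = {(k, \<sigma> k) | k. k \<in> I}"
  using assms
proof (induction rule: greedy_run.induct)
  case finished
  show ?case by (auto simp: optimal_assignment_def assignment_cost_def)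
next
  case (pick_source i I j J P)
  have "exchange_safe (\<lambda>i j. cdist n (a i) (b j)) I J i j"
    by (rule nearest_sink_exchange_safe[OF pick_source.hyps(1,2) pick_source.prems(2,3) pick_source.hyps(3)])
  moreover have "\<exists>\<sigma>. optimal_assignment (\<lambda>i j. cdist n (a i) (b j)) (I - {i}) (J - {j}) \<sigma> \<and>
      P = {(k, \<sigma> k) | k. k \<in> I - {i}}"
    using pick_source.IH pick_source.prems by simp
  ultimately show ?case
    by (rule optimal_assignment_extend[OF pick_source.prems(1) pick_source.hyps(1,2)])
next
  case (pick_sink i I j J P)
  have "exchange_safe (\<lambda>i j. cdist n (a i) (b j)) I J i j"
    by (rule nearest_source_exchange_safe[OF pick_sink.hyps(1,2) pick_sink.prems(2,3) pick_sink.hyps(3)])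
  moreover have "\<exists>\<sigma>. optimal_assignment (\<lambda>i j. cdist n (a i) (b j)) (I - {i}) (J - {j}) \<sigma> \<and>
      P = {(k, \<sigma> k) | k. k \<in> I - {i}}"
    using pick_sink.IH pick_sink.prems by simp
  ultimately show ?case
    by (rule optimal_assignment_extend[OF pick_sink.prems(1) pick_sink.hyps(1,2)])
qed

theorem mainTheorem9:
  fixes n Q :: nat and a b :: "nat \<Rightarrow> nat" and P :: "(nat \<times> nat) set"
  assumes "n \<ge> 1"
    and "\<forall>i\<in>{1..Q}. a i < n" and "\<forall>j\<in>{1..Q}. b j < n"
    and "greedy_run n a b {1..Q} {1..Q} P"
  shows "\<exists>\<sigma>. bij_betw \<sigma> {1..Q} {1..Q} \<and> P = {(i, \<sigma> i) | i. i \<in> {1..Q}} \<and>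
           (\<forall>\<tau>. bij_betw \<tau> {1..Q} {1..Q} \<longrightarrow> pairing_cost n Q a b \<sigma> \<le> pairing_cost n Q a b \<tau>)"
proof -
  have "pairing_cost n Q a b \<sigma> = assignment_cost (\<lambda>i j. cdist n (a i) (b j)) \<sigma> {1..Q}" for \<sigma>
    by (simp add: pairing_cost_def assignment_cost_def)
  then show ?thesis
    using greedy_run_optimal[OF assms(4) _ assms(2,3)] unfolding optimal_assignment_def by auto
qed

end
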